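(* Fix a coordinate $i$ and run the COCOB algorithm (defined in the context) on an arbitrary sequence of outcomes with $|g_{t,i}|\le L_i$ for all $t$. Define the wealth $\mathrm{Wealth}_{t,i}=L_i+\mathrm{Reward}_{t,i}$. Then for every $t\ge0$: (a) $\mathrm{Wealth}_{t,i}>0$, and $|\beta_{t,i}g_{t+1,i}|<1$; (b) $\mathrm{Wealth}_{t,i}\ \ge\ L_i\exp\left(\frac{\theta_{t,i}^2}{2L_i(G_{t,i}+L_i)}-\sum_{j=1}^{t}\frac{|g_{j,i}|}{2(L_i+G_{j-1,i})}\right)\ \ge\ L_i\exp\left(\frac{\theta_{t,i}^2}{2L_i(G_{t,i}+L_i)}-\frac12\ln\frac{G_{t,i}}{L_i}\right)$.
   Context: COCOB algorithm (COntinuous COin Betting). Input: constants $L_i>0$ for $i=1,\dots,d$, an initial point $\boldsymbol{w}_1\in\mathbb{R}^d$, and a number of rounds $T$. Initialize $G_{0,i}=L_i$, $\mathrm{Reward}_{0,i}=0$ and $\theta_{0,i}=0$ for every $i$. For $t=1,\dots,T$: a vector $\boldsymbol{g}_t\in\mathbb{R}^d$ is received at the current point $\boldsymbol{w}_t$; it may depend arbitrarily on $\boldsymbol{w}_1,\dots,\boldsymbol{w}_t$. Then for each $i=1,\dots,d$: - $G_{t,i}=G_{t-1,i}+|g_{t,i}|$; - $\mathrm{Reward}_{t,i}=\mathrm{Reward}_{t-1,i}+(w_{t,i}-w_{1,i})g_{t,i}$; - $\theta_{t,i}=\theta_{t-1,i}+g_{t,i}$; - $\beta_{t,i}=\frac{1}{L_i}\left(2\sigma\left(\frac{2\theta_{t,i}}{G_{t,i}+L_i}\right)-1\right)$,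 where $\sigma(x)=\frac{1}{1+e^{-x}}$; - $w_{t+1,i}=w_{1,i}+\beta_{t,i}(L_i+\mathrm{Reward}_{t,i})$. In particular $w_{t+1,i}-w_{1,i}=\beta_{t,i}\mathrm{Wealth}_{t,i}$, so that $\mathrm{Wealth}_{t+1,i}=\mathrm{Wealth}_{t,i}(1+\beta_{t,i}g_{t+1,i})$. *)

theory Defs
  imports Complex_Main
begin

text \<open>COCOB, one fixed coordinate i. The outcomes of coordinate i are g 1, g 2, ...
  (index 0 unused). L is L_i > 0, w1 is w_{1,i}.\<close>

definition sigmoid :: "real \<Rightarrow> real" where
  "sigmoid x = 1 / (1 + exp (- x))"

definition cocob_G :: "real \<Rightarrow> (nat \<Rightarrow> real) \<Rightarrow> nat \<Rightarrow> real" where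
  "cocob_G L g t = L + (\<Sum>j = 1..t. \<bar>g j\<bar>)"

definition cocob_theta :: "(nat \<Rightarrow> real) \<Rightarrow> nat \<Rightarrow> real" where
  "cocob_theta g t = (\<Sum>j = 1..t. g j)"

definition cocob_beta :: "real \<Rightarrow> (nat \<Rightarrow> real) \<Rightarrow> nat \<Rightarrow> real" where
  "cocob_beta L g t =
     (1 / L) * (2 * sigmoid (2 * cocob_theta g t / (cocob_G L g t + L)) - 1)"

text \<open>Iterates w_t (t \<ge> 1; the value at 0 is an unused convention) and Reward_t.\<close>
fun cocob_w :: "real \<Rightarrow> real \<Rightarrow> (nat \<Rightarrow> real) \<Rightarrow> nat \<Rightarrow> real"
and cocob_reward :: "real \<Rightarrow> real \<Rightarrow> (nat \<Rightarrow> real) \<Rightarrow> nat \<Rightarrow> real" where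
  "cocob_w L w1 g 0 = w1"
| "cocob_w L w1 g (Suc 0) = w1"
| "cocob_w L w1 g (Suc (Suc t)) =
     w1 + cocob_beta L g (Suc t) * (L + cocob_reward L w1 g (Suc t))"
| "cocob_reward L w1 g 0 = 0"
| "cocob_reward L w1 g (Suc t) =
     cocob_reward L w1 g t + (cocob_w L w1 g (Suc t) - w1) * g (Suc t)"

definition cocob_wealth :: "real \<Rightarrow> real \<Rightarrow> (nat \<Rightarrow> real) \<Rightarrow> nat \<Rightarrow> real" where
  "cocob_wealth L w1 g t = L + cocob_reward L w1 g t"

end

theory Submission
  imports Defs "HOL-Probability.Hoeffding"
begin

text \<open>Measured in units of L, round t+1 multiplies the wealth by 1 + tanh u * x, where
  u = theta_t / (G_t + L) and x = g_{t+1} / L lies in [-1, 1]. As cosh u \<le> exp (u^2 / 2),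
  convexity of exp gives 1 + tanh u * x \<ge> exp (u x - |x| u^2 / 2). The potential
  theta^2 / (2 L (G + L)) + theta^2 / (2 (G + L)^2), which is coin_potential (theta / L) ((G + L) / L), minus the accumulated penalty
  |g_j| / (2 (L + G_{j-1})) grows per round by at most this exponent (a polynomial inequality
  once denominators are cleared), so by induction the wealth dominates L times its exponential;
  the first bound drops the second, nonnegative term. The second bound follows by summing
  ln (1 + z) \<ge> z / (1 + z) over the rounds.\<close>

definition coin_potential :: "real \<Rightarrow> real \<Rightarrow> real" where
  "coin_potential y a = y\<^sup>2 / (2 * a) + y\<^sup>2 / (2 * a\<^sup>2)"

lemma coin_potential_minus [simp]: "coin_potential (- y) a = coin_potential y a"
  by (simp add: coin_potential_def)

lemma coin_potential_step_nonneg: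
  fixes a c y :: real
  assumes a: "a > 0" and c: "0 \<le> c" "c \<le> 1"
  shows "coin_potential (y + c) (a + c)
           \<le> coin_potential y a + (y / a) * c - c * (y / a)\<^sup>2 / 2 + c / (2 * a)"
proof -
  define M where
    "M = a*(1-c)*(y-a)^2 + (c - c*c)*y^2 + a*(y+c*c)^2 + a*c*c*(1-c*c) + a*a*c*(1-c)"
  have "c * c \<le> c" using c by (simp add: mult_left_le)
  then have "M \<ge> 0"
    unfolding M_def using a c by (intro add_nonneg_nonneg mult_nonneg_nonneg) (auto simp: mult_le_one)
  have "a \<noteq> 0" "a + c \<noteq> 0" using a c by auto
  then have "coin_potential y a + (y / a) * c - c * (y / a)\<^sup>2 / 2 + c / (2 * a)
               - coin_potential (y + c) (a + c) = c * M / (2 * a\<^sup>2 * (a + c)\<^sup>2)"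
    unfolding coin_potential_def M_def by (simp add: divide_simps) algebra
  moreover have "c * M / (2 * a\<^sup>2 * (a + c)\<^sup>2) \<ge> 0" using \<open>M \<ge> 0\<close> c by simp
  ultimately show ?thesis by linarith
qed

lemma coin_potential_step:
  fixes a x y :: real
  assumes "a > 0" and "\<bar>x\<bar> \<le> 1"
  shows "coin_potential (y + x) (a + \<bar>x\<bar>)
           \<le> coin_potential y a + (y / a) * x - \<bar>x\<bar> * (y / a)\<^sup>2 / 2 + \<bar>x\<bar> / (2 * a)"
proof (cases "x \<ge> 0")
  case True
  then show ?thesis using coin_potential_step_nonneg[of a x y] assms by simp
next
  case False
  then have "coin_potential (y + x) (a + \<bar>x\<bar>) = coin_potential (- y + \<bar>x\<bar>) (a + \<bar>x\<bar>)"
    by (metis abs_of_neg coin_potential_minus minus_add_distrib not_le)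
  also have "\<dots> \<le> coin_potential (- y) a + (- y / a) * \<bar>x\<bar> - \<bar>x\<bar> * (- y / a)\<^sup>2 / 2
                   + \<bar>x\<bar> / (2 * a)"
    using coin_potential_step_nonneg[of a "\<bar>x\<bar>" "- y"] assms by simp
  finally show ?thesis using False by simp
qed

lemma cosh_le_exp_half_square: "cosh (u :: real) \<le> exp (u\<^sup>2 / 2)"
proof -
  have pos: "1 + (exp (2 * \<bar>u\<bar>) - 1) / 2 > 0" by (simp add: add_pos_nonneg)
  have "ln (1 + (exp (2 * \<bar>u\<bar>) - 1) / 2) \<le> \<bar>u\<bar> + u\<^sup>2 / 2"
    using Hoeffdings_lemma_aux[of "2 * \<bar>u\<bar>" "1/2"] by (simp add: power2_eq_square)
  then have "1 + (exp (2 * \<bar>u\<bar>) - 1) / 2 \<le> exp (\<bar>u\<bar> + u\<^sup>2 / 2)"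
    using pos by (metis exp_le_cancel_iff exp_ln)
  also have "1 + (exp (2 * \<bar>u\<bar>) - 1) / 2 = cosh \<bar>u\<bar> * exp \<bar>u\<bar>"
    by (simp add: cosh_field_def field_simps flip: exp_add)
  finally show ?thesis by (simp add: exp_add)
qed

lemma exp_le_one_plus_tanh_mult_nonneg:
  fixes u x :: real
  assumes "0 \<le> x" "x \<le> 1"
  shows "exp (u * x - x * u\<^sup>2 / 2) \<le> 1 + tanh u * x"
proof -
  have "exp (u - u\<^sup>2 / 2) = exp u / exp (u\<^sup>2 / 2)" by (simp add: exp_diff)
  also have "\<dots> \<le> exp u / cosh u"
    by (rule divide_left_mono) (simp_all add: cosh_le_exp_half_square)
  also have "\<dots> = 1 + tanh u" by (simp add: tanh_def field_simps flip: cosh_plus_sinh)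
  finally have top: "exp (u - u\<^sup>2 / 2) \<le> 1 + tanh u" .
  have "exp (u * x - x * u\<^sup>2 / 2) = exp ((1 - x) * 0 + x * (u - u\<^sup>2 / 2))"
    by (simp add: algebra_simps)
  also have "\<dots> \<le> (1 - x) * exp 0 + x * exp (u - u\<^sup>2 / 2)"
    using convex_onD[OF exp_convex, of x 0 "u - u\<^sup>2 / 2"] assms by simp
  also have "\<dots> \<le> (1 - x) * 1 + x * (1 + tanh u)"
    using top assms by (simp add: mult_left_mono)
  finally show ?thesis by (simp add: algebra_simps)
qed

lemma exp_le_one_plus_tanh_mult:
  fixes u x :: real
  assumes "\<bar>x\<bar> \<le> 1"
  shows "exp (u * x - \<bar>x\<bar> * u\<^sup>2 / 2) \<le> 1 + tanh u * x"
proof (cases "x \<ge> 0")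
  case True
  then show ?thesis using exp_le_one_plus_tanh_mult_nonneg[of x u] assms by simp
next
  case False
  then show ?thesis using exp_le_one_plus_tanh_mult_nonneg[of "- x" "- u"] assms by simp
qed

lemma two_sigmoid_minus_one: "2 * sigmoid v - 1 = tanh (v / 2)"
proof -
  have "1 + exp (- v) > 0" by (simp add: add_pos_pos)
  then show ?thesis by (simp add: sigmoid_def tanh_real_altdef field_simps)
qed

definition cocob_penalty :: "real \<Rightarrow> (nat \<Rightarrow> real) \<Rightarrow> nat \<Rightarrow> real" where
  "cocob_penalty L g t = (\<Sum>j = 1..t. \<bar>g j\<bar> / (2 * (L + cocob_G L g (j - 1))))"

lemma cocob_G_Suc: "cocob_G L g (Suc t) = cocob_G L g t + \<bar>g (Suc t)\<bar>"
  by (simp add: cocob_G_def)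

lemma cocob_G_ge: "cocob_G L g t \<ge> L"
  by (simp add: cocob_G_def sum_nonneg)

lemma cocob_theta_0 [simp]: "cocob_theta g 0 = 0"
  by (simp add: cocob_theta_def)

lemma cocob_theta_Suc: "cocob_theta g (Suc t) = cocob_theta g t + g (Suc t)"
  by (simp add: cocob_theta_def)

lemma cocob_penalty_Suc:
  "cocob_penalty L g (Suc t) = cocob_penalty L g t + \<bar>g (Suc t)\<bar> / (2 * (L + cocob_G L g t))"
  by (simp add: cocob_penalty_def)

lemma cocob_beta_eq_tanh: "cocob_beta L g t = tanh (cocob_theta g t / (cocob_G L g t + L)) / L"
proof -
  have "2 * cocob_theta g t / (cocob_G L g t + L) / 2 = cocob_theta g t / (cocob_G L g t + L)"
    by (simp add: divide_simps)
  then show ?thesis unfolding cocob_beta_def two_sigmoid_minus_one by simp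
qed

lemma cocob_wealth_Suc:
  "cocob_wealth L w1 g (Suc t) = cocob_wealth L w1 g t * (1 + cocob_beta L g t * g (Suc t))"
proof -
  have "cocob_w L w1 g (Suc t) - w1 = cocob_beta L g t * cocob_wealth L w1 g t"
    by (cases t) (simp_all add: cocob_wealth_def cocob_beta_eq_tanh)
  then show ?thesis by (simp add: cocob_wealth_def algebra_simps)
qed

lemma cocob_bet_abs_less_one:
  assumes "L > 0" and "\<bar>g (Suc t)\<bar> \<le> L"
  shows "\<bar>cocob_beta L g t * g (Suc t)\<bar> < 1"
proof -
  have "\<bar>cocob_beta L g t * g (Suc t)\<bar>
          = \<bar>tanh (cocob_theta g t / (cocob_G L g t + L))\<bar> * (\<bar>g (Suc t)\<bar> / L)"
    using assms by (simp add: cocob_beta_eq_tanh abs_mult)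
  also have "\<dots> \<le> \<bar>tanh (cocob_theta g t / (cocob_G L g t + L))\<bar>"
    using assms by (intro mult_left_le) simp_all
  also have "\<dots> < 1" using tanh_real_bounds by (simp add: abs_less_iff)
  finally show ?thesis .
qed

lemma cocob_penalty_le_ln:
  assumes "L > 0" and "\<And>t. t \<ge> 1 \<Longrightarrow> \<bar>g t\<bar> \<le> L"
  shows "cocob_penalty L g t \<le> 1 / 2 * ln (cocob_G L g t / L)"
proof (induction t)
  case 0
  then show ?case by (simp add: cocob_penalty_def cocob_G_def)
next
  case (Suc t)
  define G where "G = cocob_G L g t"
  define h where "h = \<bar>g (Suc t)\<bar>"
  have "G > 0" "0 \<le> h" "h \<le> L" using cocob_G_ge[of L g t] assms unfolding G_def h_def by auto
  then have "h / (L + G) \<le> h / (G + h)"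
    by (intro divide_left_mono) auto
  also have "\<dots> = - (G / (G + h) - 1)" using \<open>G > 0\<close> \<open>0 \<le> h\<close> by (simp add: field_simps)
  also have "\<dots> \<le> - ln (G / (G + h))"
    using \<open>G > 0\<close> \<open>0 \<le> h\<close> ln_le_minus_one[of "G / (G + h)"] by simp
  also have "\<dots> = ln ((G + h) / L) - ln (G / L)"
    using \<open>G > 0\<close> \<open>0 \<le> h\<close> assms(1) by (simp add: ln_div)
  finally have "h / (2 * (L + G)) \<le> 1 / 2 * ln ((G + h) / L) - 1 / 2 * ln (G / L)"
    using \<open>G > 0\<close> assms(1) by (simp add: field_simps)
  then show ?case
    using Suc.IH unfolding cocob_penalty_Suc cocob_G_Suc G_def[symmetric] h_def[symmetric] by linarith
qed

lemma cocob_wealth_ge_exp_potential: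
  assumes L: "L > 0" and bounded: "\<And>t. t \<ge> 1 \<Longrightarrow> \<bar>g t\<bar> \<le> L"
  shows "L * exp (coin_potential (cocob_theta g t / L) ((cocob_G L g t + L) / L)
                  - cocob_penalty L g t) \<le> cocob_wealth L w1 g t"
proof (induction t)
  case 0
  then show ?case by (simp add: cocob_wealth_def coin_potential_def cocob_penalty_def)
next
  case (Suc t)
  define y where "y = cocob_theta g t / L"
  define a where "a = (cocob_G L g t + L) / L"
  define x where "x = g (Suc t) / L"
  define \<Phi> where "\<Phi> = coin_potential y a - cocob_penalty L g t"
  have a: "a > 0" using L cocob_G_ge[of L g t] by (simp add: a_def)
  have x: "\<bar>x\<bar> \<le> 1" using L bounded[of "Suc t"] by (simp add: x_def)
  have "coin_potential (y + x) (a + \<bar>x\<bar>) - \<bar>x\<bar> / (2 * a) - cocob_penalty L g t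
          \<le> \<Phi> + (y / a * x - \<bar>x\<bar> * (y / a)\<^sup>2 / 2)"
    using coin_potential_step[OF a x, of y] by (simp add: \<Phi>_def)
  moreover have "cocob_theta g (Suc t) / L = y + x" "(cocob_G L g (Suc t) + L) / L = a + \<bar>x\<bar>"
    "\<bar>g (Suc t)\<bar> / (2 * (L + cocob_G L g t)) = \<bar>x\<bar> / (2 * a)"
    using L by (simp_all add: y_def x_def a_def cocob_theta_Suc cocob_G_Suc field_simps)
  ultimately have "L * exp (coin_potential (cocob_theta g (Suc t) / L)
                     ((cocob_G L g (Suc t) + L) / L) - cocob_penalty L g (Suc t))
                   \<le> L * exp \<Phi> * exp (y / a * x - \<bar>x\<bar> * (y / a)\<^sup>2 / 2)"
    using L by (simp add: cocob_penalty_Suc flip: exp_add)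
  also have "\<dots> \<le> cocob_wealth L w1 g t * (1 + tanh (y / a) * x)"
    using Suc.IH L by (intro mult_mono exp_le_one_plus_tanh_mult x)
      (simp_all add: \<Phi>_def y_def a_def order_trans[OF _ Suc.IH])
  also have "\<dots> = cocob_wealth L w1 g (Suc t)"
    using L by (simp add: cocob_wealth_Suc cocob_beta_eq_tanh y_def a_def x_def)
  finally show ?case .
qed

theorem mainTheorem3:
  fixes L w1 :: real and g :: "nat \<Rightarrow> real"
  assumes "L > 0"
    and "\<And>t. t \<ge> 1 \<Longrightarrow> \<bar>g t\<bar> \<le> L"
  shows "\<forall>t::nat.
     cocob_wealth L w1 g t > 0
   \<and> \<bar>cocob_beta L g t * g (Suc t)\<bar> < 1
   \<and> cocob_wealth L w1 g t \<ge>
       L * exp ((cocob_theta g t)\<^sup>2 / (2 * L * (cocob_G L g t + L))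
                - (\<Sum>j = 1..t. \<bar>g j\<bar> / (2 * (L + cocob_G L g (j - 1)))))
   \<and> L * exp ((cocob_theta g t)\<^sup>2 / (2 * L * (cocob_G L g t + L))
                - (\<Sum>j = 1..t. \<bar>g j\<bar> / (2 * (L + cocob_G L g (j - 1)))))
       \<ge> L * exp ((cocob_theta g t)\<^sup>2 / (2 * L * (cocob_G L g t + L))
                - 1 / 2 * ln (cocob_G L g t / L))"
proof -
  define q where "q t = (cocob_theta g t)\<^sup>2 / (2 * L * (cocob_G L g t + L))" for t
  have wealth: "L * exp (q t - cocob_penalty L g t) \<le> cocob_wealth L w1 g t" for t
  proof -
    have "q t \<le> coin_potential (cocob_theta g t / L) ((cocob_G L g t + L) / L)"
      using assms(1) cocob_G_ge[of L g t]
      by (simp add: q_def coin_potential_def field_simps power2_eq_square)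
    then have "L * exp (q t - cocob_penalty L g t) \<le> L * exp (coin_potential
        (cocob_theta g t / L) ((cocob_G L g t + L) / L) - cocob_penalty L g t)"
      using assms(1) by simp
    also have "\<dots> \<le> cocob_wealth L w1 g t" by (rule cocob_wealth_ge_exp_potential[OF assms])
    finally show ?thesis .
  qed
  have positive: "cocob_wealth L w1 g t > 0" for t
    using wealth[of t] assms(1) by (meson exp_gt_zero mult_pos_pos less_le_trans)
  have bet: "\<bar>cocob_beta L g t * g (Suc t)\<bar> < 1" for t
    using cocob_bet_abs_less_one assms by simp
  have "L * exp (q t - 1 / 2 * ln (cocob_G L g t / L)) \<le> L * exp (q t - cocob_penalty L g t)"
    for t using cocob_penalty_le_ln[OF assms] assms(1) by simp
  then show ?thesis using positive bet wealth unfolding q_def cocob_penalty_def by simp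
qed

end
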